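(* Let $n\ge2$, $g,h\in H_n\rtimes S_n$ and $r\in\mathbb{N}$, and let $j^1,\dots,j^u$ be representatives of $I^c_r(g)$. If $x_1,x_2\in H_n$ both satisfy $x_1^{-1}gx_1=h$ and $x_2^{-1}gx_2=h$, then $\sum_{s=1}^u t_{j^s}(x_1)=\sum_{s=1}^u t_{j^s}(x_2)$.
   Context: $\mathbb{N}=\{1,2,\dots\}$, $X_n=\{1,\dots,n\}\times\mathbb{N}$, permutations act on the right. $H_n$ is the group of bijections $g$ of $X_n$ with $z_i(g)\in\mathbb{N}$, $t_i(g)\in\mathbb{Z}$ such that $(i,m)g=(i,m+t_i(g))$ for all $m\ge z_i(g)$. $S_n$ acts by $(i,m)\sigma=(i\sigma,m)$; $H_n\rtimes S_n\le\mathrm{Sym}(X_n)$ is generated by $H_n$ and these; each $g$ is uniquely $\omega_g\sigma_g$ with $\omega_g\in H_n$, $\sigma_g\in S_n$, $t_i(g):=t_i(\omega_g)$. $[i]_g$ is the orbit of $i$ under $\langle\sigma_g\rangle$, $|[i]_g|$ its size, $t_{[i]}(g)=\sum_{k\in[i]_g}t_k(g)$, $I^c(g)=\{i: t_{[i]}(g)=0\}$, and $I^c_r(g)=\{j\in I^c(g): |[j]_g|=r\}$. Representatives $j^1,\dots,j^u$ of $I^c_r(g)$ are elements such that $I^c_r(g)=[j^1]_g\sqcup\dots\sqcup[j^u]_g$ (disjoint union). *)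

theory Defs
  imports "HOL-Combinatorics.Combinatorics"
begin

text \<open>Points of X_n are pairs (i,m) with 1 \<le> i \<le> n and m \<ge> 1.
  Bijections of X_n are represented as functions on nat \<times> nat that are the
  identity outside X_n. Permutations act on the right, so the product gh
  corresponds to the function composition h \<circ> g.\<close>

definition Xn :: "nat \<Rightarrow> (nat \<times> nat) set" where
  "Xn n = {1..n} \<times> {1..}"

definition Hn :: "nat \<Rightarrow> ((nat \<times> nat) \<Rightarrow> (nat \<times> nat)) set" where
  "Hn n = {g. bij_betw g (Xn n) (Xn n) \<and> (\<forall>p. p \<notin> Xn n \<longrightarrow> g p = p) \<and>
     (\<forall>i\<in>{1..n}. \<exists>z::nat. z \<ge> 1 \<and> (\<exists>t::int. \<forall>m\<ge>z.
        fst (g (i, m)) = i \<and> int (snd (g (i, m))) = int m + t))}"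

definition tH :: "nat \<Rightarrow> ((nat \<times> nat) \<Rightarrow> (nat \<times> nat)) \<Rightarrow> int" where
  "tH i g = (THE t. \<exists>z::nat. \<forall>m\<ge>z. fst (g (i, m)) = i \<and> int (snd (g (i, m))) = int m + t)"

definition liftS :: "nat \<Rightarrow> (nat \<Rightarrow> nat) \<Rightarrow> (nat \<times> nat) \<Rightarrow> (nat \<times> nat)" where
  "liftS n \<sigma> p = (if p \<in> Xn n then (\<sigma> (fst p), snd p) else p)"

definition prodHS :: "nat \<Rightarrow> ((nat \<times> nat) \<Rightarrow> (nat \<times> nat)) \<Rightarrow> (nat \<Rightarrow> nat) \<Rightarrow> (nat \<times> nat) \<Rightarrow> (nat \<times> nat)" where
  "prodHS n \<omega> \<sigma> = liftS n \<sigma> \<circ> \<omega>"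

definition HSn :: "nat \<Rightarrow> ((nat \<times> nat) \<Rightarrow> (nat \<times> nat)) set" where
  "HSn n = {g. \<exists>\<omega>\<in>Hn n. \<exists>\<sigma>. \<sigma> permutes {1..n} \<and> g = prodHS n \<omega> \<sigma>}"

definition omega_of :: "nat \<Rightarrow> ((nat \<times> nat) \<Rightarrow> (nat \<times> nat)) \<Rightarrow> (nat \<times> nat) \<Rightarrow> (nat \<times> nat)" where
  "omega_of n g = (THE \<omega>. \<omega> \<in> Hn n \<and> (\<exists>\<sigma>. \<sigma> permutes {1..n} \<and> g = prodHS n \<omega> \<sigma>))"

definition sigma_of :: "nat \<Rightarrow> ((nat \<times> nat) \<Rightarrow> (nat \<times> nat)) \<Rightarrow> nat \<Rightarrow> nat" where
  "sigma_of n g = (THE \<sigma>. \<sigma> permutes {1..n} \<and> (\<exists>\<omega>\<in>Hn n. g = prodHS n \<omega> \<sigma>))"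

definition tG :: "nat \<Rightarrow> nat \<Rightarrow> ((nat \<times> nat) \<Rightarrow> (nat \<times> nat)) \<Rightarrow> int" where
  "tG n i g = tH i (omega_of n g)"

definition cls :: "nat \<Rightarrow> ((nat \<times> nat) \<Rightarrow> (nat \<times> nat)) \<Rightarrow> nat \<Rightarrow> nat set" where
  "cls n g i = {(sigma_of n g ^^ k) i | k. True}"

definition tcls :: "nat \<Rightarrow> ((nat \<times> nat) \<Rightarrow> (nat \<times> nat)) \<Rightarrow> nat \<Rightarrow> int" where
  "tcls n g i = (\<Sum>k\<in>cls n g i. tG n k g)"

definition Ic :: "nat \<Rightarrow> ((nat \<times> nat) \<Rightarrow> (nat \<times> nat)) \<Rightarrow> nat set" where
  "Ic n g = {i\<in>{1..n}. tcls n g i = 0}"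

definition Icr :: "nat \<Rightarrow> ((nat \<times> nat) \<Rightarrow> (nat \<times> nat)) \<Rightarrow> nat \<Rightarrow> nat set" where
  "Icr n g r = {j\<in>Ic n g. card (cls n g j) = r}"

definition reps :: "nat \<Rightarrow> ((nat \<times> nat) \<Rightarrow> (nat \<times> nat)) \<Rightarrow> nat \<Rightarrow> (nat \<Rightarrow> nat) \<Rightarrow> nat \<Rightarrow> bool" where
  "reps n g r js u \<longleftrightarrow>
     Icr n g r = (\<Union>s\<in>{1..u}. cls n g (js s)) \<and>
     (\<forall>s\<in>{1..u}. \<forall>s'\<in>{1..u}. s \<noteq> s' \<longrightarrow> cls n g (js s) \<inter> cls n g (js s') = {})"

text \<open>x^{-1} g x = h, with right action: p(x^{-1} g x) = x(g(x^{-1}(p))).\<close>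
definition conj_eq :: "nat \<Rightarrow> ((nat \<times> nat) \<Rightarrow> (nat \<times> nat)) \<Rightarrow> ((nat \<times> nat) \<Rightarrow> (nat \<times> nat)) \<Rightarrow> ((nat \<times> nat) \<Rightarrow> (nat \<times> nat)) \<Rightarrow> bool" where
  "conj_eq n x g h \<longleftrightarrow> (\<forall>p\<in>Xn n. x (g (inv_into (Xn n) x p)) = h p)"

end

theory Submission
  imports Defs
begin

text \<open>
  Since x1\<inverse> g x1 = h = x2\<inverse> g x2, the element c = x1 x2\<inverse> of H_n centralises g, and far out
  in row i it translates by s_i = t_i(x1) - t_i(x2). Hence c permutes the set P of points of X_n
  whose g-orbit has exactly r elements. Far out in row i, g acts as (i,m) \<mapsto> (i\<sigma>_g, m + t_i(g)),
  so a point there has g-period r iff i \<in> I^c_r(g): up to finitely many points, P is the union of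
  the tails of the rows in I^c_r(g). Counting the points of P below a high level before and after
  applying c shows that the translations s_i sum to 0 over I^c_r(g). Finally s is constant along
  the cycles of \<sigma>_g because c commutes with g, so this sum is r times the sum of the s_{j^s}.
\<close>

section \<open>Orbits of a permutation\<close>

lemma periodic_add_mult:
  fixes f :: "nat \<Rightarrow> 'a" and m :: nat
  assumes "\<And>l. f (l + d) = f l"
  shows "f (l + m * d) = f l"
proof (induction m)
  case (Suc m)
  have "l + Suc m * d = (l + m * d) + d" by simp
  then show ?case using assms Suc.IH by metis
qed simp

lemma sum_lessThan_mult_period:
  fixes f :: "nat \<Rightarrow> 'a::semiring_1"
  assumes "\<And>l. f (l + d) = f l"
  shows "(\<Sum>l<q * d. f l) = of_nat q * (\<Sum>l<d. f l)"
proof -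
  have block: "(\<Sum>l\<in>{m * d..<m * d + d}. f l) = (\<Sum>l<d. f l)" for m
    using sum.shift_bounds_nat_ivl[of f 0 "m * d" d]
    by (simp add: periodic_add_mult[of f, OF assms] atLeast0LessThan add.commute)
  have "(\<Sum>l<q * d. f l) = (\<Sum>m<q. \<Sum>l\<in>{m * d..<m * d + d}. f l)"
    by (rule sum.nat_group[symmetric])
  then show ?thesis by (simp add: block)
qed

lemma orbit_eq_image_least_power:
  assumes "permutation \<sigma>"
  shows "range (\<lambda>k. (\<sigma> ^^ k) i) = (\<lambda>k. (\<sigma> ^^ k) i) ` {..<least_power \<sigma> i}"
  using support_set[OF assms, of i] by (simp add: atLeast0LessThan)

lemma inj_on_least_power:
  assumes "permutation \<sigma>"
  shows "inj_on (\<lambda>k. (\<sigma> ^^ k) i) {..<least_power \<sigma> i}"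
  using cycle_of_permutation[OF assms, of i] by (simp add: distinct_map atLeast0LessThan)

lemma card_orbit_eq_least_power:
  assumes "permutation \<sigma>"
  shows "card (range (\<lambda>k. (\<sigma> ^^ k) i)) = least_power \<sigma> i"
  using orbit_eq_image_least_power[OF assms] inj_on_least_power[OF assms]
  by (simp add: card_image)

lemma sum_orbit_eq_least_power:
  assumes "permutation \<sigma>"
  shows "(\<Sum>j\<in>range (\<lambda>k. (\<sigma> ^^ k) i). f j) = (\<Sum>l<least_power \<sigma> i. f ((\<sigma> ^^ l) i))"
  using orbit_eq_image_least_power[OF assms] inj_on_least_power[OF assms]
  by (simp add: sum.reindex)

lemma funpow_return_sum_eq_0_iff:
  fixes t :: "'a \<Rightarrow> 'b::{semiring_char_0, semiring_no_zero_divisors}"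
  assumes "permutation \<sigma>" "0 < k"
  shows "(\<sigma> ^^ k) i = i \<and> (\<Sum>l<k. t ((\<sigma> ^^ l) i)) = 0 \<longleftrightarrow>
         least_power \<sigma> i dvd k \<and> (\<Sum>l<least_power \<sigma> i. t ((\<sigma> ^^ l) i)) = 0"
proof (cases "least_power \<sigma> i dvd k")
  case True
  then obtain q where k: "k = q * least_power \<sigma> i" by (auto simp: dvd_def mult.commute)
  have period: "(\<sigma> ^^ (l + least_power \<sigma> i)) i = (\<sigma> ^^ l) i" for l
    by (simp add: funpow_add least_power_of_permutation(1)[OF assms(1)])
  have "(\<Sum>l<k. t ((\<sigma> ^^ l) i)) = of_nat q * (\<Sum>l<least_power \<sigma> i. t ((\<sigma> ^^ l) i))"
    unfolding k by (intro sum_lessThan_mult_period) (simp add: period)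
  moreover have "q \<noteq> 0" using k assms(2) by auto
  ultimately show ?thesis using True least_power_dvd[OF assms(1)] by simp
next
  case False
  then show ?thesis using least_power_dvd[OF assms(1)] by simp
qed

section \<open>Maps that eventually translate each row\<close>

definition shifts_tails ::
    "'a set \<Rightarrow> ('a \<Rightarrow> 'a) \<Rightarrow> ('a \<Rightarrow> int) \<Rightarrow> ('a \<times> nat \<Rightarrow> 'a \<times> nat) \<Rightarrow> bool" where
  "shifts_tails I \<sigma> t f \<longleftrightarrow>
    (\<forall>\<^sub>F m in sequentially. \<forall>i\<in>I. f (i, m) = (\<sigma> i, nat (int m + t i)))"

lemma eventually_sequentially_nat_add:
  assumes "eventually P sequentially"
  shows "\<forall>\<^sub>F m in sequentially. P (nat (int m + c))"
proof -
  obtain N where "\<forall>n\<ge>N. P n" using assms by (auto simp: eventually_sequentially)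
  then show ?thesis
    by (intro eventually_sequentiallyI[of "N + nat (- c)"]) (auto elim!: allE mp)
qed

lemma eventually_sequentially_int_add_ge: "\<forall>\<^sub>F m in sequentially. k \<le> int m + c"
  by (intro eventually_sequentiallyI[of "nat (k - c)"]) linarith

lemma shifts_tails_funpow:
  assumes "finite I" "\<sigma> ` I \<subseteq> I" "shifts_tails I \<sigma> t f"
  shows "shifts_tails I (\<sigma> ^^ k) (\<lambda>i. \<Sum>l<k. t ((\<sigma> ^^ l) i)) (f ^^ k)"
proof (induction k)
  case 0
  then show ?case by (simp add: shifts_tails_def)
next
  case (Suc k)
  let ?S = "\<lambda>k i. \<Sum>l<k. t ((\<sigma> ^^ l) i)"
  have step: "\<forall>\<^sub>F m in sequentially. \<forall>i\<in>I. f (i, m) = (\<sigma> i, nat (int m + t i))"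
    using assms(3) by (simp add: shifts_tails_def)
  have pos: "\<forall>\<^sub>F m in sequentially. \<forall>i\<in>I. 0 \<le> int m + t i"
    using assms(1) by (intro eventually_ball_finite ballI eventually_sequentially_int_add_ge)
  have IH: "\<forall>\<^sub>F m in sequentially. \<forall>i\<in>I. \<forall>j\<in>I.
      (f ^^ k) (j, nat (int m + t i)) = ((\<sigma> ^^ k) j, nat (int (nat (int m + t i)) + ?S k j))"
    using assms(1) by (intro eventually_ball_finite ballI
        eventually_sequentially_nat_add[OF Suc.IH[unfolded shifts_tails_def]])
  have sum_Suc: "?S (Suc k) i = t i + ?S k (\<sigma> i)" for i
    unfolding sum.lessThan_Suc_shift by (simp add: funpow_swap1)
  show ?case
    unfolding shifts_tails_def using step pos IH
  proof eventually_elim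
    case (elim m)
    show ?case
    proof
      fix i assume i: "i \<in> I"
      have "(f ^^ Suc k) (i, m) = (f ^^ k) (\<sigma> i, nat (int m + t i))"
        using elim i by (simp only: funpow_Suc_right comp_apply)
      also have "\<dots> = ((\<sigma> ^^ Suc k) i, nat (int m + ?S (Suc k) i))"
        unfolding sum_Suc funpow_Suc_right comp_apply using elim i assms(2) by (auto simp: add.assoc)
      finally show "(f ^^ Suc k) (i, m) = ((\<sigma> ^^ Suc k) i, nat (int m + ?S (Suc k) i))" .
    qed
  qed
qed

lemma shifts_tails_commute_cycle_invariant:
  assumes "finite I" "\<sigma> ` I \<subseteq> I" "shifts_tails I \<sigma> t g" "shifts_tails I id s c"
    and commute: "\<And>i m. i \<in> I \<Longrightarrow> 0 < m \<Longrightarrow> c (g (i, m)) = g (c (i, m))"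
    and i: "i \<in> I"
  shows "s (\<sigma> i) = s i"
proof -
  have \<sigma>i: "\<sigma> i \<in> I" using assms(2) i by blast
  have g_tail: "\<forall>\<^sub>F m in sequentially. g (j, m) = (\<sigma> j, nat (int m + t j))" if "j \<in> I" for j
    using assms(3) that unfolding shifts_tails_def by (auto elim: eventually_mono)
  have c_tail: "\<forall>\<^sub>F m in sequentially. c (j, m) = (j, nat (int m + s j))" if "j \<in> I" for j
    using assms(4) that unfolding shifts_tails_def by (auto elim: eventually_mono)
  have "\<forall>\<^sub>F m in sequentially. s (\<sigma> i) = s i"
    using eventually_gt_at_top[of 0] g_tail[OF i] c_tail[OF i]
      eventually_sequentially_nat_add[OF c_tail[OF \<sigma>i], of "t i"]
      eventually_sequentially_nat_add[OF g_tail[OF i], of "s i"]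
      eventually_sequentially_int_add_ge[of 0 "t i"] eventually_sequentially_int_add_ge[of 0 "s i"]
      eventually_sequentially_int_add_ge[of 0 "t i + s (\<sigma> i)"]
      eventually_sequentially_int_add_ge[of 0 "s i + t i"]
  proof eventually_elim
    case (elim m)
    have "c (g (i, m)) = g (c (i, m))" using commute[OF i elim(1)] .
    then show ?case using elim(2-) by (simp add: eq_nat_nat_iff add.assoc)
  qed
  then show ?thesis by simp
qed

section \<open>Points of exact period r\<close>

definition exact_period :: "('a \<Rightarrow> 'a) \<Rightarrow> nat \<Rightarrow> 'a \<Rightarrow> bool" where
  "exact_period f r x \<longleftrightarrow> (f ^^ r) x = x \<and> (\<forall>k. 0 < k \<longrightarrow> k < r \<longrightarrow> (f ^^ k) x \<noteq> x)"

lemma bij_commuting_image_exact_period: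
  assumes c: "bij_betw c X X" and f: "f ` X \<subseteq> X"
    and commute: "\<And>x. x \<in> X \<Longrightarrow> c (f x) = f (c x)"
  shows "c ` {x \<in> X. exact_period f r x} = {x \<in> X. exact_period f r x}"
proof -
  have fX: "(f ^^ k) x \<in> X" if "x \<in> X" for k x
    using that f by (induction k) auto
  have commute_funpow: "c ((f ^^ k) x) = (f ^^ k) (c x)" if "x \<in> X" for k x
    using that by (induction k) (simp_all add: commute fX)
  have "(f ^^ k) (c x) = c x \<longleftrightarrow> (f ^^ k) x = x" if "x \<in> X" for k x
    using that fX commute_funpow bij_betw_imp_inj_on[OF c] by (metis inj_on_eq_iff)
  then have "exact_period f r (c x) \<longleftrightarrow> exact_period f r x" if "x \<in> X" for x
    using that by (simp add: exact_period_def)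
  note period_c = this
  show ?thesis
  proof (intro equalityI subsetI)
    fix y assume "y \<in> c ` {x \<in> X. exact_period f r x}"
    then show "y \<in> {x \<in> X. exact_period f r x}"
      using period_c bij_betw_apply[OF c] by auto
  next
    fix y assume y: "y \<in> {x \<in> X. exact_period f r x}"
    then obtain x where "x \<in> X" "y = c x"
      using c by (auto simp: bij_betw_def)
    then show "y \<in> c ` {x \<in> X. exact_period f r x}"
      using y period_c by auto
  qed
qed

lemma eventually_exact_period_rows:
  fixes t :: "'a \<Rightarrow> int"
  assumes "finite I" "\<sigma> permutes I" "shifts_tails I \<sigma> t g" "0 < r"
  shows "\<forall>\<^sub>F m in sequentially. \<forall>i\<in>I.
    exact_period g r (i, m) \<longleftrightarrow> least_power \<sigma> i = r \<and> (\<Sum>l<r. t ((\<sigma> ^^ l) i)) = 0"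
proof -
  let ?S = "\<lambda>k i. \<Sum>l<k. t ((\<sigma> ^^ l) i)"
  have perm: "permutation \<sigma>"
    using assms(1,2) permutation_permutes by blast
  have "\<forall>\<^sub>F m in sequentially. 0 < m \<and>
      (\<forall>k\<in>{..r}. \<forall>i\<in>I. (g ^^ k) (i, m) = ((\<sigma> ^^ k) i, nat (int m + ?S k i)))"
    using assms(1,2,3) shifts_tails_funpow[of I \<sigma> t g] permutes_image[OF assms(2)]
    by (intro eventually_conj eventually_gt_at_top eventually_ball_finite)
       (auto simp: shifts_tails_def)
  then show ?thesis
  proof eventually_elim
    case (elim m)
    show ?case
    proof
      fix i assume i: "i \<in> I"
      let ?ret = "\<lambda>k. least_power \<sigma> i dvd k \<and> ?S (least_power \<sigma> i) i = 0"
      have "(g ^^ k) (i, m) = (i, m) \<longleftrightarrow> ?ret k" if "0 < k" "k \<le> r" for k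
        using elim i that funpow_return_sum_eq_0_iff[OF perm \<open>0 < k\<close>, of i t] by auto
      then have "exact_period g r (i, m) \<longleftrightarrow> ?ret r \<and> (\<forall>k. 0 < k \<longrightarrow> k < r \<longrightarrow> \<not> ?ret k)"
        using assms(4) by (auto simp: exact_period_def)
      also have "\<dots> \<longleftrightarrow> least_power \<sigma> i = r \<and> ?S r i = 0"
      proof (cases "least_power \<sigma> i = r")
        case False
        then show ?thesis
          using least_power_of_permutation(2)[OF perm, of i] assms(4)
          by (metis dvd_imp_le dvd_refl le_neq_implies_less)
      qed (use assms(4) nat_dvd_not_less in auto)
      finally show "exact_period g r (i, m) \<longleftrightarrow> least_power \<sigma> i = r \<and> ?S r i = 0" .
    qed
  qed
qed

section \<open>Translations preserving an eventually row-wise set\<close>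

definition below :: "('a \<times> nat) set \<Rightarrow> ('a \<Rightarrow> int) \<Rightarrow> ('a \<times> nat) set" where
  "below P a = {p \<in> P. int (snd p) < a (fst p)}"

lemma card_below_eventual_rows:
  fixes P :: "('a \<times> nat) set" and a :: "'a \<Rightarrow> int"
  assumes "finite I" "P \<subseteq> I \<times> UNIV" "R \<subseteq> I"
    and rows: "\<And>i m. i \<in> I \<Longrightarrow> Z \<le> m \<Longrightarrow> (i, m) \<in> P \<longleftrightarrow> i \<in> R"
    and a: "\<And>i. i \<in> I \<Longrightarrow> int Z \<le> a i"
  shows "int (card (below P a)) = int (card (below P (\<lambda>_. int Z))) + (\<Sum>i\<in>R. a i - int Z)"
proof -
  have finR: "finite R" using assms(1,3) finite_subset by blast
  have fin_low: "finite (below P (\<lambda>_. int Z))"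
    by (rule finite_subset[of _ "I \<times> {..<Z}"]) (use assms(1,2) in \<open>auto simp: below_def\<close>)
  have split: "below P a = below P (\<lambda>_. int Z) \<union> (SIGMA i:R. {Z..<nat (a i)})"
  proof (intro equalityI subsetI)
    fix p assume "p \<in> below P a"
    then show "p \<in> below P (\<lambda>_. int Z) \<union> (SIGMA i:R. {Z..<nat (a i)})"
      using rows[of "fst p" "snd p"] assms(2) by (cases "snd p < Z") (auto simp: below_def)
  next
    fix p assume "p \<in> below P (\<lambda>_. int Z) \<union> (SIGMA i:R. {Z..<nat (a i)})"
    then show "p \<in> below P a"
      using rows[of "fst p" "snd p"] a[of "fst p"] assms(2,3) by (auto simp: below_def)
  qed
  have "card (below P a) = card (below P (\<lambda>_. int Z)) + (\<Sum>i\<in>R. nat (a i) - Z)"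
    unfolding split using fin_low finR
    by (subst card_Un_disjoint) (auto simp: card_SigmaI below_def)
  moreover have "int (nat (a i) - Z) = a i - int Z" if "i \<in> R" for i
    using a[of i] that assms(3) by auto
  ultimately show ?thesis by simp
qed

lemma image_below_subset_below_shift:
  fixes c :: "'a \<times> nat \<Rightarrow> 'a \<times> nat" and s :: "'a \<Rightarrow> int"
  assumes inj: "inj_on c (I \<times> {1..})" and P: "P \<subseteq> I \<times> {1..}" "c ` P = P" and "1 \<le> Z"
    and tail: "\<And>i m. i \<in> I \<Longrightarrow> Z \<le> m \<Longrightarrow> c (i, m) = (i, nat (int m + s i))"
    and N: "\<And>i. i \<in> I \<Longrightarrow> int Z + \<bar>s i\<bar> \<le> int N"
  shows "c ` below P (\<lambda>_. int N) \<subseteq> below P (\<lambda>i. int N + s i)"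
proof
  fix q assume "q \<in> c ` below P (\<lambda>_. int N)"
  then obtain i m where p: "(i, m) \<in> P" "m < N" and q: "q = c (i, m)" by (auto simp: below_def)
  have qP: "q \<in> P" using P p q by blast
  obtain i' m' where q': "q = (i', m')" by (cases q)
  have i: "i \<in> I" and i': "i' \<in> I" "1 \<le> m'" using p qP P q' by auto
  show "q \<in> below P (\<lambda>i. int N + s i)"
  proof (cases "Z \<le> m")
    case True
    then show ?thesis using tail[OF i True] q q' qP i' p(2) by (auto simp: below_def)
  next
    case False
    have "int m' < int N + s i'"
    proof (rule ccontr)
      assume "\<not> int m' < int N + s i'"
      then have Z_le: "Z \<le> nat (int m' - s i')" using N[OF i'(1)] by linarith
      moreover have "0 \<le> int m' - s i'" using Z_le \<open>1 \<le> Z\<close> by linarith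
      ultimately have "c (i', nat (int m' - s i')) = c (i, m)"
        using tail[OF i'(1) Z_le] q q' by simp
      moreover have "(i', nat (int m' - s i')) \<in> I \<times> {1..}" using i'(1) Z_le \<open>1 \<le> Z\<close> by auto
      ultimately have "(i', nat (int m' - s i')) = (i, m)" using inj p P by (auto dest: inj_onD)
      then show False using False Z_le by simp
    qed
    then show ?thesis using qP q' by (simp add: below_def)
  qed
qed

lemma below_shift_subset_image_below:
  fixes c :: "'a \<times> nat \<Rightarrow> 'a \<times> nat" and s :: "'a \<Rightarrow> int"
  assumes P: "P \<subseteq> I \<times> {1..}" "c ` P = P"
    and tail: "\<And>i m. i \<in> I \<Longrightarrow> Z \<le> m \<Longrightarrow> c (i, m) = (i, nat (int m + s i))"
    and N: "\<And>i. i \<in> I \<Longrightarrow> int Z + \<bar>s i\<bar> \<le> int N"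
  shows "below P (\<lambda>i. int N + s i) \<subseteq> c ` below P (\<lambda>_. int N)"
proof
  fix q assume q: "q \<in> below P (\<lambda>i. int N + s i)"
  then obtain i m where p: "(i, m) \<in> P" and q_eq: "q = c (i, m)"
    using P(2) by (force simp: below_def)
  have i: "i \<in> I" using p P by auto
  have "m < N"
  proof (cases "Z \<le> m")
    case True
    then have q_tail: "q = (i, nat (int m + s i))" using tail[OF i] q_eq by simp
    then have "1 \<le> nat (int m + s i)" using q P by (auto simp: below_def)
    then show ?thesis using q q_tail by (simp add: below_def split: if_splits)
  next
    case False
    then show ?thesis using N[OF i] by linarith
  qed
  then show "q \<in> c ` below P (\<lambda>_. int N)" using p q_eq by (auto simp: below_def)
qed

lemma sum_shifts_invariant_rows_eq_0:
  fixes c :: "'a \<times> nat \<Rightarrow> 'a \<times> nat" and s :: "'a \<Rightarrow> int"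
  assumes "finite I" "inj_on c (I \<times> {1..})" "P \<subseteq> I \<times> {1..}" "c ` P = P" "R \<subseteq> I"
    and "shifts_tails I id s c"
    and "\<forall>\<^sub>F m in sequentially. \<forall>i\<in>I. (i, m) \<in> P \<longleftrightarrow> i \<in> R"
  shows "(\<Sum>i\<in>R. s i) = 0"
proof -
  have "\<forall>\<^sub>F m in sequentially. 1 \<le> m \<and>
      (\<forall>i\<in>I. c (i, m) = (i, nat (int m + s i)) \<and> ((i, m) \<in> P \<longleftrightarrow> i \<in> R))"
    using assms(6,7) unfolding shifts_tails_def
    by (intro eventually_conj) (auto elim: eventually_elim2)
  then obtain Z where Z: "1 \<le> Z"
    and tail: "\<And>i m. i \<in> I \<Longrightarrow> Z \<le> m \<Longrightarrow> c (i, m) = (i, nat (int m + s i))"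
    and rows: "\<And>i m. i \<in> I \<Longrightarrow> Z \<le> m \<Longrightarrow> (i, m) \<in> P \<longleftrightarrow> i \<in> R"
    by (auto simp: eventually_sequentially)
  define N where "N = Z + nat (\<Sum>i\<in>I. \<bar>s i\<bar>)"
  have N: "int Z + \<bar>s i\<bar> \<le> int N" if "i \<in> I" for i
    using member_le_sum[of i I "\<lambda>i. \<bar>s i\<bar>"] that assms(1) by (simp add: N_def)
  have card_below: "int (card (below P a)) =
      int (card (below P (\<lambda>_. int Z))) + (\<Sum>i\<in>R. a i - int Z)"
    if "\<And>i. i \<in> I \<Longrightarrow> int Z \<le> a i" for a
    using assms(1,3,5) rows that by (intro card_below_eventual_rows) auto
  have "c ` below P (\<lambda>_. int N) = below P (\<lambda>i. int N + s i)"
    using image_below_subset_below_shift[OF assms(2-4) Z tail N]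
      below_shift_subset_image_below[OF assms(3,4) tail N] by blast
  moreover have "inj_on c (below P (\<lambda>_. int N))"
    using assms(3) by (intro inj_on_subset[OF assms(2)]) (auto simp: below_def)
  ultimately have "card (below P (\<lambda>i. int N + s i)) = card (below P (\<lambda>_. int N))"
    by (metis card_image)
  moreover have "int (card (below P (\<lambda>_. int N))) =
      int (card (below P (\<lambda>_. int Z))) + (\<Sum>i\<in>R. int N - int Z)"
    by (rule card_below) (use N in fastforce)
  moreover have "int (card (below P (\<lambda>i. int N + s i))) =
      int (card (below P (\<lambda>_. int Z))) + (\<Sum>i\<in>R. int N + s i - int Z)"
    by (rule card_below) (use N in fastforce)
  ultimately have "(\<Sum>i\<in>R. int N + s i - int Z) = (\<Sum>i\<in>R. int N - int Z)"
    by simp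
  then show ?thesis by (simp add: sum.distrib sum_subtractf algebra_simps)
qed

section \<open>The groups H_n and H_n \<rtimes> S_n\<close>

lemma tH_eqI:
  assumes "\<forall>m\<ge>z. fst (\<omega> (i, m)) = i \<and> int (snd (\<omega> (i, m))) = int m + t"
  shows "tH i \<omega> = t"
  unfolding tH_def
proof (rule the_equality)
  fix t' assume "\<exists>z'. \<forall>m\<ge>z'. fst (\<omega> (i, m)) = i \<and> int (snd (\<omega> (i, m))) = int m + t'"
  then obtain z' where "\<forall>m\<ge>z'. int (snd (\<omega> (i, m))) = int m + t'" by blast
  then show "t' = t" using assms by (metis add_left_cancel max.cobounded1 max.cobounded2)
qed (use assms in blast)

lemma Hn_shifts_tails:
  assumes "\<omega> \<in> Hn n"
  shows "shifts_tails {1..n} id (\<lambda>i. tH i \<omega>) \<omega>"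
  unfolding shifts_tails_def
proof (intro eventually_ball_finite ballI)
  fix i assume "i \<in> {1..n}"
  then obtain z t where z: "\<forall>m\<ge>z. fst (\<omega> (i, m)) = i \<and> int (snd (\<omega> (i, m))) = int m + t"
    using assms unfolding Hn_def by blast
  then have "\<omega> (i, m) = (i, nat (int m + tH i \<omega>))" if "z \<le> m" for m
    using that tH_eqI[OF z] by (metis id_apply nat_int prod.collapse)
  then show "\<forall>\<^sub>F m in sequentially. \<omega> (i, m) = (id i, nat (int m + tH i \<omega>))"
    by (auto simp: eventually_sequentially)
qed simp

lemma shifts_tails_prodHS:
  assumes "shifts_tails {1..n} id t \<omega>"
  shows "shifts_tails {1..n} \<sigma> t (prodHS n \<omega> \<sigma>)"
proof -
  have "\<forall>\<^sub>F m in sequentially. \<forall>i\<in>{1..n}. 1 \<le> int m + t i"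
    by (intro eventually_ball_finite ballI eventually_sequentially_int_add_ge) simp
  with assms show ?thesis
    unfolding shifts_tails_def by eventually_elim (auto simp: prodHS_def liftS_def Xn_def)
qed

lemma liftS_Xn:
  assumes "\<sigma> permutes {1..n}" "p \<in> Xn n"
  shows "liftS n \<sigma> p \<in> Xn n"
proof -
  have "\<sigma> (fst p) \<in> {1..n}"
    using assms(2) by (intro permutes_in_image[OF assms(1), THEN iffD2]) (auto simp: Xn_def)
  then show ?thesis using assms(2) by (auto simp: liftS_def Xn_def)
qed

lemma liftS_inverse:
  assumes "\<sigma> permutes {1..n}"
  shows "liftS n (inv \<sigma>) (liftS n \<sigma> p) = p"
  using liftS_Xn[OF assms, of p] by (simp add: liftS_def permutes_inverses(2)[OF assms])

lemma prodHS_unique: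
  assumes "\<omega> \<in> Hn n" "\<omega>' \<in> Hn n" "\<sigma> permutes {1..n}" "\<sigma>' permutes {1..n}"
    and eq: "prodHS n \<omega> \<sigma> = prodHS n \<omega>' \<sigma>'"
  shows "\<omega> = \<omega>' \<and> \<sigma> = \<sigma>'"
proof -
  have "\<forall>\<^sub>F m in sequentially. \<forall>i\<in>{1..n}. \<sigma> i = \<sigma>' i"
    using shifts_tails_prodHS[OF Hn_shifts_tails[OF assms(1)], of \<sigma>, unfolded eq]
      shifts_tails_prodHS[OF Hn_shifts_tails[OF assms(2)], of \<sigma>']
    unfolding shifts_tails_def by eventually_elim auto
  then have "\<sigma> i = \<sigma>' i" for i
    using permutes_not_in[OF assms(3)] permutes_not_in[OF assms(4)] by (cases "i \<in> {1..n}") auto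
  then have \<sigma>: "\<sigma> = \<sigma>'" ..
  have "\<omega> p = \<omega>' p" for p
    using arg_cong[OF fun_cong[OF eq, of p], of "liftS n (inv \<sigma>)"]
    by (simp add: prodHS_def \<sigma> liftS_inverse[OF assms(4)])
  with \<sigma> show ?thesis by blast
qed

lemma HSn_decomposition:
  assumes "g \<in> HSn n"
  shows "omega_of n g \<in> Hn n" "sigma_of n g permutes {1..n}"
    and "g = prodHS n (omega_of n g) (sigma_of n g)"
proof -
  obtain \<omega> \<sigma> where w: "\<omega> \<in> Hn n" "\<sigma> permutes {1..n}" "g = prodHS n \<omega> \<sigma>"
    using assms unfolding HSn_def by blast
  have unique: "\<omega>' = \<omega> \<and> \<sigma>' = \<sigma>"
    if "\<omega>' \<in> Hn n" "\<sigma>' permutes {1..n}" "g = prodHS n \<omega>' \<sigma>'" for \<omega>' \<sigma>'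
    using prodHS_unique[OF that(1) w(1) that(2) w(2) trans[OF that(3)[symmetric] w(3)]] .
  have "omega_of n g = \<omega>"
    unfolding omega_of_def
  proof (rule the_equality)
    fix \<omega>' assume "\<omega>' \<in> Hn n \<and> (\<exists>\<sigma>'. \<sigma>' permutes {1..n} \<and> g = prodHS n \<omega>' \<sigma>')"
    then show "\<omega>' = \<omega>" using unique by blast
  qed (use w in blast)
  moreover have "sigma_of n g = \<sigma>"
    unfolding sigma_of_def
  proof (rule the_equality)
    fix \<sigma>' assume "\<sigma>' permutes {1..n} \<and> (\<exists>\<omega>'\<in>Hn n. g = prodHS n \<omega>' \<sigma>')"
    then show "\<sigma>' = \<sigma>" using unique by blast
  qed (use w in blast)
  ultimately show "omega_of n g \<in> Hn n" "sigma_of n g permutes {1..n}"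
    and "g = prodHS n (omega_of n g) (sigma_of n g)"
    using w by simp_all
qed

lemma HSn_shifts_tails:
  assumes "g \<in> HSn n"
  shows "shifts_tails {1..n} (sigma_of n g) (\<lambda>i. tG n i g) g"
  using shifts_tails_prodHS[OF Hn_shifts_tails[OF HSn_decomposition(1)[OF assms]], of "sigma_of n g"]
  unfolding tG_def HSn_decomposition(3)[OF assms, symmetric] .

lemma HSn_image_Xn:
  assumes "g \<in> HSn n"
  shows "g ` Xn n \<subseteq> Xn n"
proof -
  define \<omega> \<sigma> where "\<omega> = omega_of n g" and "\<sigma> = sigma_of n g"
  have "\<omega> ` Xn n \<subseteq> Xn n"
    using HSn_decomposition(1)[OF assms] unfolding \<omega>_def Hn_def bij_betw_def by blast
  moreover have "liftS n \<sigma> ` Xn n \<subseteq> Xn n"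
    using liftS_Xn[OF HSn_decomposition(2)[OF assms]] unfolding \<sigma>_def by blast
  moreover have "g = liftS n \<sigma> \<circ> \<omega>"
    unfolding \<omega>_def \<sigma>_def prodHS_def[symmetric] by (rule HSn_decomposition(3)[OF assms])
  ultimately show ?thesis by (simp only: image_comp[symmetric]) blast
qed

section \<open>Centralisers and common conjugators\<close>

lemma conj_eq_quotient_commutes:
  assumes x1: "x1 \<in> Hn n" and x2: "x2 \<in> Hn n"
    and conj: "conj_eq n x1 g h" "conj_eq n x2 g h"
    and g: "g ` Xn n \<subseteq> Xn n" and p: "p \<in> Xn n"
  shows "(inv_into (Xn n) x2 \<circ> x1) (g p) = g ((inv_into (Xn n) x2 \<circ> x1) p)"
proof -
  let ?c = "inv_into (Xn n) x2 \<circ> x1"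
  have bij1: "bij_betw x1 (Xn n) (Xn n)" and bij2: "bij_betw x2 (Xn n) (Xn n)"
    using x1 x2 by (simp_all add: Hn_def)
  have x1p: "x1 p \<in> Xn n" using bij_betw_apply[OF bij1 p] .
  have cp: "?c p \<in> Xn n" and x2cp: "x2 (?c p) = x1 p"
    using x1p bij2 by (auto simp: bij_betw_def inv_into_into f_inv_into_f)
  have "x1 (g p) = h (x1 p)"
    using conj(1) x1p bij_betw_inv_into_left[OF bij1 p] by (auto simp: conj_eq_def)
  also have "\<dots> = x2 (g (?c p))"
    using conj(2) x1p x2cp bij_betw_inv_into_left[OF bij2 cp] by (auto simp: conj_eq_def)
  finally have "?c (g p) = inv_into (Xn n) x2 (x2 (g (?c p)))" by simp
  also have "\<dots> = g (?c p)"
    using g cp bij_betw_inv_into_left[OF bij2] by blast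
  finally show ?thesis .
qed

lemma Hn_quotient_shifts_tails:
  assumes "x1 \<in> Hn n" "x2 \<in> Hn n"
  shows "shifts_tails {1..n} id (\<lambda>i. tH i x1 - tH i x2) (inv_into (Xn n) x2 \<circ> x1)"
proof -
  let ?t = "\<lambda>i. tH i x1 - tH i x2"
  have inj2: "inj_on x2 (Xn n)" using assms(2) by (simp add: Hn_def bij_betw_def)
  have tail1: "\<forall>\<^sub>F m in sequentially. \<forall>i\<in>{1..n}. x1 (i, m) = (i, nat (int m + tH i x1))"
    using Hn_shifts_tails[OF assms(1)] by (simp add: shifts_tails_def)
  have tail2: "\<forall>\<^sub>F m in sequentially. \<forall>i\<in>{1..n}. \<forall>j\<in>{1..n}.
      x2 (j, nat (int m + ?t i)) = (j, nat (int (nat (int m + ?t i)) + tH j x2))"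
    by (intro eventually_ball_finite ballI eventually_sequentially_nat_add
        Hn_shifts_tails[OF assms(2), unfolded shifts_tails_def id_apply]) simp
  have pos: "\<forall>\<^sub>F m in sequentially. \<forall>i\<in>{1..n}. 1 \<le> int m + ?t i"
    by (intro eventually_ball_finite ballI eventually_sequentially_int_add_ge) simp
  show ?thesis
    unfolding shifts_tails_def using tail1 tail2 pos
  proof eventually_elim
    case (elim m)
    show ?case
    proof
      fix i assume i: "i \<in> {1..n}"
      have pos_i: "1 \<le> int m + ?t i" using elim i by blast
      have "x2 (i, nat (int m + ?t i)) = (i, nat (int (nat (int m + ?t i)) + tH i x2))"
        using elim i by blast
      also have "\<dots> = x1 (i, m)"
        using bspec[OF elim(1) i] pos_i by simp
      finally have "x2 (i, nat (int m + ?t i)) = x1 (i, m)" .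
      moreover have "(i, nat (int m + ?t i)) \<in> Xn n"
        using i pos_i by (simp add: Xn_def)
      ultimately show "(inv_into (Xn n) x2 \<circ> x1) (i, m) = (id i, nat (int m + ?t i))"
        by (simp add: inv_into_f_eq[OF inj2])
    qed
  qed
qed

lemma HSn_permutation: "g \<in> HSn n \<Longrightarrow> permutation (sigma_of n g)"
  using HSn_decomposition(2) permutation_permutes by blast

lemma cls_eq_orbit: "cls n g i = range (\<lambda>k. (sigma_of n g ^^ k) i)"
  by (auto simp: cls_def)

lemma Icr_iff:
  assumes "g \<in> HSn n"
  shows "i \<in> Icr n g r \<longleftrightarrow> i \<in> {1..n} \<and> least_power (sigma_of n g) i = r \<and>
    (\<Sum>l<r. tG n ((sigma_of n g ^^ l) i) g) = 0"
  by (auto simp: Icr_def Ic_def tcls_def cls_eq_orbit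
      card_orbit_eq_least_power[OF HSn_permutation[OF assms]]
      sum_orbit_eq_least_power[OF HSn_permutation[OF assms]])

lemma centraliser_shift_cycle_invariant:
  assumes "g \<in> HSn n" and commute: "\<And>p. p \<in> Xn n \<Longrightarrow> c (g p) = g (c p)"
    and "shifts_tails {1..n} id s c" and "i \<in> {1..n}"
  shows "s (sigma_of n g i) = s i"
proof (rule shifts_tails_commute_cycle_invariant[OF _ _ HSn_shifts_tails[OF assms(1)] assms(3) _
      assms(4)])
  show "sigma_of n g ` {1..n} \<subseteq> {1..n}"
    using permutes_image[OF HSn_decomposition(2)[OF assms(1)]] by simp
  show "c (g (j, m)) = g (c (j, m))" if "j \<in> {1..n}" "0 < m" for j m
    using commute that by (simp add: Xn_def)
qed simp

lemma sum_Icr_shifts_eq_0: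
  assumes g: "g \<in> HSn n" and "0 < r" and c: "bij_betw c (Xn n) (Xn n)"
    and commute: "\<And>p. p \<in> Xn n \<Longrightarrow> c (g p) = g (c p)" and s: "shifts_tails {1..n} id s c"
  shows "(\<Sum>i\<in>Icr n g r. s i) = 0"
proof -
  let ?P = "{p \<in> Xn n. exact_period g r p}"
  have image: "c ` ?P = ?P"
    using bij_commuting_image_exact_period[OF c HSn_image_Xn[OF g] commute] .
  have rows: "\<forall>\<^sub>F m in sequentially. \<forall>i\<in>{1..n}. (i, m) \<in> ?P \<longleftrightarrow> i \<in> Icr n g r"
    using eventually_exact_period_rows[OF finite_atLeastAtMost HSn_decomposition(2)[OF g]
        HSn_shifts_tails[OF g] \<open>0 < r\<close>] eventually_gt_at_top[of 0]
    by eventually_elim (auto simp: Xn_def Icr_iff[OF g] tG_def)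
  show ?thesis
  proof (rule sum_shifts_invariant_rows_eq_0[OF finite_atLeastAtMost _ _ image _ s rows])
    show "inj_on c ({1..n} \<times> {1..})" using c by (simp add: Xn_def bij_betw_def)
    show "?P \<subseteq> {1..n} \<times> {1..}" by (auto simp: Xn_def)
    show "Icr n g r \<subseteq> {1..n}" by (auto simp: Icr_def Ic_def)
  qed
qed

lemma sum_Icr_reps:
  fixes f :: "nat \<Rightarrow> 'a::comm_semiring_1"
  assumes g: "g \<in> HSn n" and reps: "reps n g r js u"
    and f: "\<And>i. i \<in> {1..n} \<Longrightarrow> f (sigma_of n g i) = f i"
  shows "(\<Sum>i\<in>Icr n g r. f i) = of_nat r * (\<Sum>s=1..u. f (js s))"
proof -
  let ?\<sigma> = "sigma_of n g"
  have Icr: "Icr n g r = (\<Union>s\<in>{1..u}. cls n g (js s))"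
    and disj: "\<forall>s\<in>{1..u}. \<forall>s'\<in>{1..u}. s \<noteq> s' \<longrightarrow> cls n g (js s) \<inter> cls n g (js s') = {}"
    using reps by (simp_all add: reps_def)
  have fin: "finite (cls n g i)" for i
    unfolding cls_eq_orbit orbit_eq_image_least_power[OF HSn_permutation[OF g]] by simp
  have const: "f ((?\<sigma> ^^ k) i) = f i" if "i \<in> {1..n}" for i k
  proof (induction k)
    case (Suc k)
    have "(?\<sigma> ^^ k) i \<in> {1..n}"
      using permutes_in_funpow_image[OF HSn_decomposition(2)[OF g] that] .
    then show ?case using f Suc.IH by simp
  qed simp
  have "(\<Sum>j\<in>cls n g (js s). f j) = of_nat r * f (js s)" if "s \<in> {1..u}" for s
  proof -
    have "js s \<in> cls n g (js s)" by (auto simp: cls_eq_orbit intro: range_eqI[of _ _ 0])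
    then have "js s \<in> Icr n g r" using Icr that by blast
    then have js_n: "js s \<in> {1..n}" and card: "card (cls n g (js s)) = r"
      by (simp_all add: Icr_def Ic_def)
    have "(\<Sum>j\<in>cls n g (js s). f j) = (\<Sum>j\<in>cls n g (js s). f (js s))"
      by (rule sum.cong) (auto simp: cls_eq_orbit const[OF js_n])
    then show ?thesis using card by simp
  qed
  then show ?thesis
    unfolding Icr using fin disj by (simp add: sum.UNION_disjoint sum_distrib_left)
qed

theorem lemma4p22:
  fixes n r u :: nat and g h x1 x2 :: "nat \<times> nat \<Rightarrow> nat \<times> nat" and js :: "nat \<Rightarrow> nat"
  assumes "n \<ge> 2" and "g \<in> HSn n" and "h \<in> HSn n" and "r \<ge> 1"
    and "reps n g r js u"
    and "x1 \<in> Hn n" and "x2 \<in> Hn n"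
    and "conj_eq n x1 g h" and "conj_eq n x2 g h"
  shows "(\<Sum>s=1..u. tH (js s) x1) = (\<Sum>s=1..u. tH (js s) x2)"
proof -
  define c where "c = inv_into (Xn n) x2 \<circ> x1"
  define s where "s i = tH i x1 - tH i x2" for i
  have bij: "bij_betw c (Xn n) (Xn n)"
    using assms(6,7) unfolding c_def Hn_def by (blast intro: bij_betw_trans bij_betw_inv_into)
  have commute: "c (g p) = g (c p)" if "p \<in> Xn n" for p
    unfolding c_def using conj_eq_quotient_commutes[OF assms(6-9) HSn_image_Xn[OF assms(2)] that] .
  have tails: "shifts_tails {1..n} id s c"
    unfolding c_def s_def using Hn_quotient_shifts_tails[OF assms(6,7)] .
  have cycle_invariant: "s (sigma_of n g i) = s i" if "i \<in> {1..n}" for i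
    using centraliser_shift_cycle_invariant[OF assms(2) _ tails that] commute by blast
  have "of_nat r * (\<Sum>j=1..u. s (js j)) = (\<Sum>i\<in>Icr n g r. s i)"
    using sum_Icr_reps[where f = s, OF assms(2,5) cycle_invariant] by simp
  also have "\<dots> = 0"
    using sum_Icr_shifts_eq_0[OF assms(2) _ bij commute tails] assms(4) by simp
  finally show ?thesis
    using assms(4) by (simp add: s_def sum_subtractf)
qed

end
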